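(* Let $(F,+,\cdot)$ be a left near-field and let $((K,\boxplus,\boxdot),(K,\cdot))$ be an elementary near-vector space associated with $(F,+,\cdot)$. Then $1\in Q(K)$, so $\boxplus_1:=+_1$ is defined, and there exists a right quasi-multiplicative bijection $\phi:(K,\cdot)\to(F,\cdot)$ such that $\alpha\boxplus_1\beta=\phi^{-1}(\phi(\alpha)+\phi(\beta))$ for all $\alpha,\beta\in K$; moreover $(K,\boxplus_1,\cdot)$ is a left near-field.
   Context: A scalar group is a tuple $(F,\cdot,1,0,-1)$ where $(F,\cdot,1)$ is a monoid, $0\ne1$, $0\alpha=\alpha0=0$, $\{1,-1\}$ is exactly the solution set of $x^2=1$, and $(F\setminus\{0\},\cdot)$ is a group. A left near-field $(F,+,\cdot)$: $(F,+)$ a group with identity $0$, $(F\setminus\{0\},\cdot)$ a group, $0\cdot\alpha=0$, $\gamma(\alpha+\beta)=\gamma\alpha+\gamma\beta$. A (left) near-vector space $((V,\boxplus,\boxdot),(F,\cdot))$: $(F,\cdot)$ scalar group, $(V,\boxplus)$ abelian group, $\boxdot:F\times V\to V$ with $1\boxdot v=v$, $\alpha\boxdot(\beta\boxdot v)=(\alpha\beta)\boxdot v$, $\alpha\boxdot(v\boxplus w)=\alpha\boxdot v\boxplus\alpha\boxdot w$, $(-1)\boxdot v=\boxminus v$, $0\boxdot v=0$, freeness, and quasi-kernel $Q(V)=\{v:\forall\alpha,\beta\,\exists\gamma,\ \alpha\boxdot v\boxplus\beta\boxdot v=\gamma\boxdot v\}$ generating $V$; for $u\in Q(V)\setminus\{0\}$,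 $\alpha+_u\beta$ is the unique $\gamma$ with $\alpha\boxdot u\boxplus\beta\boxdot u=\gamma\boxdot u$. An isomorphism $(\Psi,\varphi)$ of near-vector spaces: additive bijection $\Psi$ and group isomorphism $\varphi$ between the nonzero scalars with $\Psi(\alpha\boxdot_1u)=\varphi(\alpha)\boxdot_2\Psi(u)$. The canonical near-vector space of $(F,+,\cdot)$ is $((F,+,\cdot),(F,\cdot))$. An elementary near-vector space associated with a left near-field $(F,+,\cdot)$ is a near-vector space of the form $((K,\boxplus,\boxdot),(K,\cdot))$ (vectors and scalars on the same set $K$) isomorphic to the canonical near-vector space of $(F,+,\cdot)$. A right quasi-multiplicative bijection $\phi:(K,\cdot)\to(F,\cdot)$ is a bijection of the form $\phi(\alpha)=\varphi(\alpha)\lambda$ with $\varphi$ a multiplicative bijection (bijective monoid morphism) and $\lambda\in F\setminus\{0\}$. *)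

theory Defs
  imports Main
begin

definition group_on :: "'a set \<Rightarrow> ('a \<Rightarrow> 'a \<Rightarrow> 'a) \<Rightarrow> 'a \<Rightarrow> bool" where
  "group_on S f e \<longleftrightarrow>
     e \<in> S \<and> (\<forall>a\<in>S. \<forall>b\<in>S. f a b \<in> S) \<and>
     (\<forall>a\<in>S. \<forall>b\<in>S. \<forall>c\<in>S. f (f a b) c = f a (f b c)) \<and>
     (\<forall>a\<in>S. f e a = a \<and> f a e = a) \<and>
     (\<forall>a\<in>S. \<exists>b\<in>S. f a b = e \<and> f b a = e)"

text \<open>Scalar group (K, mult, one, zero, neg), neg playing the role of -1.\<close>
definition scalar_group :: "'k set \<Rightarrow> ('k \<Rightarrow> 'k \<Rightarrow> 'k) \<Rightarrow> 'k \<Rightarrow> 'k \<Rightarrow> 'k \<Rightarrow> bool" where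
  "scalar_group K mult one zero neg \<longleftrightarrow>
     one \<in> K \<and> zero \<in> K \<and> neg \<in> K \<and>
     (\<forall>a\<in>K. \<forall>b\<in>K. mult a b \<in> K) \<and>
     (\<forall>a\<in>K. \<forall>b\<in>K. \<forall>c\<in>K. mult (mult a b) c = mult a (mult b c)) \<and>
     (\<forall>a\<in>K. mult one a = a \<and> mult a one = a) \<and>
     zero \<noteq> one \<and>
     (\<forall>a\<in>K. mult zero a = zero \<and> mult a zero = zero) \<and>
     {x\<in>K. mult x x = one} = {one, neg} \<and>
     group_on (K - {zero}) mult one"

definition left_near_field :: "'f set \<Rightarrow> ('f \<Rightarrow> 'f \<Rightarrow> 'f) \<Rightarrow> ('f \<Rightarrow> 'f \<Rightarrow> 'f) \<Rightarrow> 'f \<Rightarrow> bool" where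
  "left_near_field F add mult zero \<longleftrightarrow>
     group_on F add zero \<and>
     (\<forall>a\<in>F. \<forall>b\<in>F. mult a b \<in> F) \<and>
     (\<exists>e. group_on (F - {zero}) mult e) \<and>
     (\<forall>a\<in>F. mult zero a = zero) \<and>
     (\<forall>a\<in>F. \<forall>b\<in>F. \<forall>c\<in>F. mult c (add a b) = add (mult c a) (mult c b))"

definition nf_one :: "'f set \<Rightarrow> ('f \<Rightarrow> 'f \<Rightarrow> 'f) \<Rightarrow> 'f \<Rightarrow> 'f" where
  "nf_one F mult zero = (THE e. group_on (F - {zero}) mult e)"

definition quasi_kernel :: "'v set \<Rightarrow> ('v \<Rightarrow> 'v \<Rightarrow> 'v) \<Rightarrow> 'k set \<Rightarrow> ('k \<Rightarrow> 'v \<Rightarrow> 'v) \<Rightarrow> 'v set" where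
  "quasi_kernel V vadd K smult =
     {v\<in>V. \<forall>a\<in>K. \<forall>b\<in>K. \<exists>c\<in>K. vadd (smult a v) (smult b v) = smult c v}"

definition add_at :: "'k set \<Rightarrow> ('v \<Rightarrow> 'v \<Rightarrow> 'v) \<Rightarrow> ('k \<Rightarrow> 'v \<Rightarrow> 'v) \<Rightarrow> 'v \<Rightarrow> 'k \<Rightarrow> 'k \<Rightarrow> 'k" where
  "add_at K vadd smult u a b = (THE c. c \<in> K \<and> vadd (smult a u) (smult b u) = smult c u)"

definition gen_subgroup :: "'v set \<Rightarrow> ('v \<Rightarrow> 'v \<Rightarrow> 'v) \<Rightarrow> 'v \<Rightarrow> 'v set \<Rightarrow> 'v set" where
  "gen_subgroup V vadd vzero A =
     \<Inter>{H. H \<subseteq> V \<and> A \<subseteq> H \<and> vzero \<in> H \<and> (\<forall>u\<in>H. \<forall>w\<in>H. vadd u w \<in> H) \<and>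
          (\<forall>u\<in>H. \<exists>w\<in>H. vadd u w = vzero)}"

definition near_vector_space ::
  "'v set \<Rightarrow> ('v \<Rightarrow> 'v \<Rightarrow> 'v) \<Rightarrow> 'v \<Rightarrow> ('k \<Rightarrow> 'v \<Rightarrow> 'v) \<Rightarrow>
   'k set \<Rightarrow> ('k \<Rightarrow> 'k \<Rightarrow> 'k) \<Rightarrow> 'k \<Rightarrow> 'k \<Rightarrow> 'k \<Rightarrow> bool" where
  "near_vector_space V vadd vzero smult K mult one zero neg \<longleftrightarrow>
     scalar_group K mult one zero neg \<and>
     group_on V vadd vzero \<and> (\<forall>u\<in>V. \<forall>w\<in>V. vadd u w = vadd w u) \<and>
     (\<forall>a\<in>K. \<forall>v\<in>V. smult a v \<in> V) \<and>
     (\<forall>v\<in>V. smult one v = v) \<and>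
     (\<forall>a\<in>K. \<forall>b\<in>K. \<forall>v\<in>V. smult a (smult b v) = smult (mult a b) v) \<and>
     (\<forall>a\<in>K. \<forall>v\<in>V. \<forall>w\<in>V. smult a (vadd v w) = vadd (smult a v) (smult a w)) \<and>
     (\<forall>v\<in>V. vadd (smult neg v) v = vzero) \<and>
     (\<forall>v\<in>V. smult zero v = vzero) \<and>
     (\<forall>a\<in>K. \<forall>b\<in>K. \<forall>v\<in>V. smult a v = smult b v \<longrightarrow> v = vzero \<or> a = b) \<and>
     gen_subgroup V vadd vzero (quasi_kernel V vadd K smult) = V"

text \<open>Isomorphism (Psi, phi) of near-vector spaces (only the data used in the definition).\<close>
definition nvs_iso ::
  "'v set \<Rightarrow> ('v \<Rightarrow> 'v \<Rightarrow> 'v) \<Rightarrow> ('k \<Rightarrow> 'v \<Rightarrow> 'v) \<Rightarrow> 'k set \<Rightarrow> ('k \<Rightarrow> 'k \<Rightarrow> 'k) \<Rightarrow> 'k \<Rightarrow>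
   'w set \<Rightarrow> ('w \<Rightarrow> 'w \<Rightarrow> 'w) \<Rightarrow> ('l \<Rightarrow> 'w \<Rightarrow> 'w) \<Rightarrow> 'l set \<Rightarrow> ('l \<Rightarrow> 'l \<Rightarrow> 'l) \<Rightarrow> 'l \<Rightarrow>
   ('v \<Rightarrow> 'w) \<Rightarrow> ('k \<Rightarrow> 'l) \<Rightarrow> bool" where
  "nvs_iso V1 vadd1 smult1 K1 mult1 zero1 V2 vadd2 smult2 K2 mult2 zero2 Psi phi \<longleftrightarrow>
     bij_betw Psi V1 V2 \<and>
     (\<forall>u\<in>V1. \<forall>w\<in>V1. Psi (vadd1 u w) = vadd2 (Psi u) (Psi w)) \<and>
     bij_betw phi (K1 - {zero1}) (K2 - {zero2}) \<and>
     (\<forall>a\<in>K1 - {zero1}. \<forall>b\<in>K1 - {zero1}. phi (mult1 a b) = mult2 (phi a) (phi b)) \<and>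
     (\<forall>a\<in>K1 - {zero1}. \<forall>u\<in>V1. Psi (smult1 a u) = smult2 (phi a) (Psi u))"

text \<open>Elementary near-vector space ((K, vadd, smult), (K, mult, one, zero, neg)) associated with
  the left near-field (F, fadd, fmult) (additive identity fzero): vectors and scalars live on the
  same set K (sharing the zero element), and it is isomorphic to the canonical near-vector
  space ((F, fadd, fmult), (F, fmult)).\<close>
definition elementary_nvs ::
  "'k set \<Rightarrow> ('k \<Rightarrow> 'k \<Rightarrow> 'k) \<Rightarrow> ('k \<Rightarrow> 'k \<Rightarrow> 'k) \<Rightarrow> ('k \<Rightarrow> 'k \<Rightarrow> 'k) \<Rightarrow> 'k \<Rightarrow> 'k \<Rightarrow> 'k \<Rightarrow>
   'f set \<Rightarrow> ('f \<Rightarrow> 'f \<Rightarrow> 'f) \<Rightarrow> ('f \<Rightarrow> 'f \<Rightarrow> 'f) \<Rightarrow> 'f \<Rightarrow> bool" where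
  "elementary_nvs K vadd smult mult one zero neg F fadd fmult fzero \<longleftrightarrow>
     near_vector_space K vadd zero smult K mult one zero neg \<and>
     (\<exists>Psi phi. nvs_iso K vadd smult K mult zero F fadd fmult F fmult fzero Psi phi)"

definition right_qm_bij ::
  "'k set \<Rightarrow> ('k \<Rightarrow> 'k \<Rightarrow> 'k) \<Rightarrow> 'k \<Rightarrow> 'f set \<Rightarrow> ('f \<Rightarrow> 'f \<Rightarrow> 'f) \<Rightarrow> 'f \<Rightarrow> 'f \<Rightarrow> ('k \<Rightarrow> 'f) \<Rightarrow> bool" where
  "right_qm_bij K mult one F fmult fone fzero phi \<longleftrightarrow>
     bij_betw phi K F \<and>
     (\<exists>vphi lam. bij_betw vphi K F \<and>
        (\<forall>a\<in>K. \<forall>b\<in>K. vphi (mult a b) = fmult (vphi a) (vphi b)) \<and>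
        vphi one = fone \<and>
        lam \<in> F - {fzero} \<and>
        (\<forall>a\<in>K. phi a = fmult (vphi a) lam))"

end

theory Submission
  imports Defs
begin

(*
  An isomorphism (Psi, phi0) onto the canonical near-vector space of F transports all structure.
  Extending phi0 by zero gives a multiplicative bijection phi0' : K -> F (scalar_map), and
  phi a := Psi (a . 1) = phi0' a * Psi 1 (coord) is right quasi-multiplicative with lambda = Psi 1.
  Additivity and injectivity of Psi give a.1 + b.1 = (phi^-1 (phi a + phi b)).1, so 1 lies in
  the quasi-kernel and +_1 is the transport of + along phi: (K, +_1) is a group because (F, +) is.
  Left distributivity of the scalar multiplication over +_u holds in every near-vector space.
*)

lemma group_on_identity_unique:
  assumes "group_on S f e" and "group_on S f e'"
  shows "e = e'"
  using assms unfolding group_on_def by metis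

lemma group_on_idempotent:
  assumes G: "group_on S f e" and "x \<in> S" and "f x x = x"
  shows "x = e"
proof -
  obtain y where y: "y \<in> S" "f y x = e" using G \<open>x \<in> S\<close> unfolding group_on_def by blast
  have "x = f (f y x) x" using G \<open>x \<in> S\<close> y unfolding group_on_def by auto
  also have "\<dots> = f y (f x x)" using G \<open>x \<in> S\<close> y unfolding group_on_def by auto
  finally show ?thesis using \<open>f x x = x\<close> y by simp
qed

lemma group_on_hom_identity:
  assumes "group_on A f e" and "group_on B g e'"
    and "h ` A \<subseteq> B" and "\<And>a b. a \<in> A \<Longrightarrow> b \<in> A \<Longrightarrow> h (f a b) = g (h a) (h b)"
  shows "h e = e'"
proof -
  have "e \<in> A" and "f e e = e" using assms(1) unfolding group_on_def by auto
  then have "g (h e) (h e) = h e" using assms(4)[of e e] by simp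
  then show ?thesis using group_on_idempotent[OF assms(2)] \<open>e \<in> A\<close> assms(3) by blast
qed

lemma group_on_transfer:
  assumes h: "bij_betw h A B" and G: "group_on B g (h e)" and "e \<in> A"
    and closed: "\<And>a b. a \<in> A \<Longrightarrow> b \<in> A \<Longrightarrow> f a b \<in> A"
    and hom: "\<And>a b. a \<in> A \<Longrightarrow> b \<in> A \<Longrightarrow> h (f a b) = g (h a) (h b)"
  shows "group_on A f e"
proof -
  have inj: "\<And>a b. a \<in> A \<Longrightarrow> b \<in> A \<Longrightarrow> h a = h b \<Longrightarrow> a = b"
    using h by (meson bij_betw_imp_inj_on inj_onD)
  have hA: "\<And>a. a \<in> A \<Longrightarrow> h a \<in> B" using h by (meson bij_betw_apply)
  have gassoc: "\<forall>x\<in>B. \<forall>y\<in>B. \<forall>z\<in>B. g (g x y) z = g x (g y z)"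
    and gident: "\<forall>x\<in>B. g (h e) x = x \<and> g x (h e) = x"
    using G unfolding group_on_def by blast+
  have assoc: "f (f a b) c = f a (f b c)" if "a \<in> A" "b \<in> A" "c \<in> A" for a b c
  proof -
    have "h (f (f a b) c) = g (g (h a) (h b)) (h c)" using that closed hom by simp
    also have "\<dots> = g (h a) (g (h b) (h c))" using that hA gassoc by simp
    also have "\<dots> = h (f a (f b c))" using that closed hom by simp
    finally show ?thesis using closed that by (auto elim!: inj[rotated 2])
  qed
  have ident: "f e a = a \<and> f a e = a" if "a \<in> A" for a
  proof -
    have "h (f e a) = h a" "h (f a e) = h a"
      using that \<open>e \<in> A\<close> hom hA gident by simp_all
    then show ?thesis using that \<open>e \<in> A\<close> closed by (auto elim!: inj[rotated 2])
  qed
  have inverse: "\<exists>b\<in>A. f a b = e \<and> f b a = e" if a: "a \<in> A" for a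
  proof -
    obtain y where y: "y \<in> B" "g (h a) y = h e" "g y (h a) = h e"
      using G hA[OF a] unfolding group_on_def by blast
    then obtain b where b: "b \<in> A" "h b = y" using h unfolding bij_betw_def by blast
    then have "h (f a b) = h e" "h (f b a) = h e" using a y hom by simp_all
    then have "f a b = e" "f b a = e" using a b closed \<open>e \<in> A\<close> by (auto elim!: inj[rotated 2])
    then show ?thesis using b by blast
  qed
  show ?thesis unfolding group_on_def using \<open>e \<in> A\<close> closed assoc ident inverse by blast
qed

lemma bij_betw_fun_upd_Diff:
  assumes "bij_betw f (A - {a}) (B - {b})" and "a \<in> A" and "b \<in> B"
  shows "bij_betw (f(a := b)) A B"
proof -
  have "bij_betw (f(a := b)) (A - {a}) (B - {b})"
    using assms(1) by (rule bij_betw_cong[THEN iffD1, rotated]) auto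
  then have "bij_betw (f(a := b)) (A - {a} \<union> {a}) (B - {b} \<union> {(f(a := b)) a})"
    by (intro notIn_Un_bij_betw) auto
  then show ?thesis using assms(2,3) by (simp add: insert_absorb)
qed

lemma nf_one_eq:
  assumes "group_on (F - {fzero}) fmult e"
  shows "nf_one F fmult fzero = e"
  unfolding nf_one_def using assms group_on_identity_unique by (metis the_equality)

lemma left_near_field_mult_zero_right:
  assumes L: "left_near_field F fadd fmult fzero" and "x \<in> F"
  shows "fmult x fzero = fzero"
proof -
  have G: "group_on F fadd fzero" and "fmult x fzero \<in> F" and "fzero \<in> F"
    using assms unfolding left_near_field_def group_on_def by auto
  have "fmult x fzero = fmult x (fadd fzero fzero)"
    using G \<open>fzero \<in> F\<close> unfolding group_on_def by auto
  also have "\<dots> = fadd (fmult x fzero) (fmult x fzero)"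
    using L \<open>x \<in> F\<close> \<open>fzero \<in> F\<close> unfolding left_near_field_def by blast
  finally show ?thesis using group_on_idempotent[OF G \<open>fmult x fzero \<in> F\<close>] by simp
qed

lemma left_near_field_bij_mult_right:
  assumes L: "left_near_field F fadd fmult fzero" and "p \<in> F - {fzero}"
  shows "bij_betw (\<lambda>x. fmult x p) F F"
proof -
  obtain e where E: "group_on (F - {fzero}) fmult e"
    using L unfolding left_near_field_def by auto
  obtain q where q: "q \<in> F - {fzero}" "fmult p q = e" "fmult q p = e"
    using E \<open>p \<in> F - {fzero}\<close> unfolding group_on_def by blast
  have closed: "\<And>a b. a \<in> F \<Longrightarrow> b \<in> F \<Longrightarrow> fmult a b \<in> F"
    and zero_left: "\<And>a. a \<in> F \<Longrightarrow> fmult fzero a = fzero"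
    using L unfolding left_near_field_def by auto
  have cancel: "fmult (fmult x a) b = x" if "x \<in> F" "a \<in> F - {fzero}" "b \<in> F - {fzero}"
    "fmult a b = e" for x a b
  proof (cases "x = fzero")
    case True
    then show ?thesis using that closed zero_left by simp
  next
    case False
    then have "fmult (fmult x a) b = fmult x (fmult a b)"
      using E that unfolding group_on_def by (meson DiffI singletonD)
    then show ?thesis using E that False unfolding group_on_def by simp
  qed
  show ?thesis
    by (rule bij_betw_byWitness[where f' = "\<lambda>x. fmult x q"])
      (use cancel closed \<open>p \<in> F - {fzero}\<close> q in auto)
qed

lemma near_vector_space_add_at_eqI:
  assumes N: "near_vector_space V vadd vzero smult K mult one zero neg"
    and "u \<in> V" "u \<noteq> vzero" "c \<in> K"
    and "vadd (smult a u) (smult b u) = smult c u"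
  shows "add_at K vadd smult u a b = c"
  unfolding add_at_def
proof (rule the_equality)
  fix d assume "d \<in> K \<and> vadd (smult a u) (smult b u) = smult d u"
  then show "d = c" using N assms(2-5) unfolding near_vector_space_def by metis
qed (use assms(4,5) in simp)

lemma near_vector_space_add_at:
  assumes N: "near_vector_space V vadd vzero smult K mult one zero neg"
    and u: "u \<in> quasi_kernel V vadd K smult" "u \<noteq> vzero" and "a \<in> K" "b \<in> K"
  shows "add_at K vadd smult u a b \<in> K \<and>
    vadd (smult a u) (smult b u) = smult (add_at K vadd smult u a b) u"
proof -
  obtain c where c: "c \<in> K" "vadd (smult a u) (smult b u) = smult c u"
    using u \<open>a \<in> K\<close> \<open>b \<in> K\<close> unfolding quasi_kernel_def by blast
  moreover have "add_at K vadd smult u a b = c"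
    using near_vector_space_add_at_eqI[OF N _ u(2) c] u(1) unfolding quasi_kernel_def by blast
  ultimately show ?thesis by simp
qed

lemma near_vector_space_add_at_left_distrib:
  assumes N: "near_vector_space V vadd vzero smult K mult one zero neg"
    and u: "u \<in> quasi_kernel V vadd K smult" "u \<noteq> vzero" and abc: "a \<in> K" "b \<in> K" "c \<in> K"
  shows "mult c (add_at K vadd smult u a b) = add_at K vadd smult u (mult c a) (mult c b)"
proof -
  let ?d = "add_at K vadd smult u a b"
  have d: "?d \<in> K" "vadd (smult a u) (smult b u) = smult ?d u"
    using near_vector_space_add_at[OF N u abc(1,2)] by auto
  have "u \<in> V" using u(1) unfolding quasi_kernel_def by blast
  have "mult c ?d \<in> K"
    using N abc d(1) unfolding near_vector_space_def scalar_group_def by auto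
  have "smult (mult c ?d) u = smult c (smult ?d u)"
    using N abc d(1) \<open>u \<in> V\<close> unfolding near_vector_space_def by auto
  also have "\<dots> = vadd (smult c (smult a u)) (smult c (smult b u))"
    using N abc \<open>u \<in> V\<close> unfolding d(2)[symmetric] near_vector_space_def by auto
  also have "\<dots> = vadd (smult (mult c a) u) (smult (mult c b) u)"
    using N abc \<open>u \<in> V\<close> unfolding near_vector_space_def by auto
  finally show ?thesis
    using near_vector_space_add_at_eqI[OF N \<open>u \<in> V\<close> u(2) \<open>mult c ?d \<in> K\<close>] by simp
qed

lemma left_near_field_scalar_groupI:
  assumes "scalar_group K mult one zero neg" and "group_on K add zero"
    and "\<And>a b c. a \<in> K \<Longrightarrow> b \<in> K \<Longrightarrow> c \<in> K \<Longrightarrow> mult c (add a b) = add (mult c a) (mult c b)"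
  shows "left_near_field K add mult zero"
  using assms unfolding left_near_field_def scalar_group_def by blast

locale elementary_nvs_coordinates =
  fixes F :: "'f set" and fadd fmult :: "'f \<Rightarrow> 'f \<Rightarrow> 'f" and fzero :: 'f
    and K :: "'k set" and vadd smult mult :: "'k \<Rightarrow> 'k \<Rightarrow> 'k" and one zero neg :: 'k
    and Psi :: "'k \<Rightarrow> 'f" and phi0 :: "'k \<Rightarrow> 'f"
  assumes near_field: "left_near_field F fadd fmult fzero"
    and nvs: "near_vector_space K vadd zero smult K mult one zero neg"
    and iso: "nvs_iso K vadd smult K mult zero F fadd fmult F fmult fzero Psi phi0"
begin

definition scalar_map :: "'k \<Rightarrow> 'f" where
  "scalar_map = phi0(zero := fzero)"

definition coord :: "'k \<Rightarrow> 'f" where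
  "coord a = Psi (smult a one)"

lemma scalar_group: "scalar_group K mult one zero neg"
  using nvs unfolding near_vector_space_def by blast

lemma one_in_K: "one \<in> K" and zero_in_K: "zero \<in> K" and zero_ne_one: "zero \<noteq> one"
  and mult_zero: "\<And>a. a \<in> K \<Longrightarrow> mult zero a = zero \<and> mult a zero = zero"
  and mult_group: "group_on (K - {zero}) mult one"
  using scalar_group unfolding scalar_group_def by auto

lemma fzero_in_F: "fzero \<in> F"
  and fadd_in_F: "x \<in> F \<Longrightarrow> y \<in> F \<Longrightarrow> fadd x y \<in> F"
  and fmult_zero_left: "x \<in> F \<Longrightarrow> fmult fzero x = fzero"
  using near_field unfolding left_near_field_def group_on_def by auto

lemma smult_in_K: "a \<in> K \<Longrightarrow> u \<in> K \<Longrightarrow> smult a u \<in> K"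
  and vadd_in_K: "u \<in> K \<Longrightarrow> w \<in> K \<Longrightarrow> vadd u w \<in> K"
  and smult_zero: "u \<in> K \<Longrightarrow> smult zero u = zero"
  using nvs unfolding near_vector_space_def group_on_def by auto

lemma Psi_bij: "bij_betw Psi K F"
  and Psi_add: "u \<in> K \<Longrightarrow> w \<in> K \<Longrightarrow> Psi (vadd u w) = fadd (Psi u) (Psi w)"
  and phi0_bij: "bij_betw phi0 (K - {zero}) (F - {fzero})"
  and phi0_mult: "a \<in> K - {zero} \<Longrightarrow> b \<in> K - {zero} \<Longrightarrow> phi0 (mult a b) = fmult (phi0 a) (phi0 b)"
  and Psi_smult_nonzero: "a \<in> K - {zero} \<Longrightarrow> u \<in> K \<Longrightarrow> Psi (smult a u) = fmult (phi0 a) (Psi u)"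
  using iso unfolding nvs_iso_def by auto

lemma Psi_zero: "Psi zero = fzero"
proof (rule group_on_hom_identity[where h = Psi])
  show "group_on K vadd zero" using nvs unfolding near_vector_space_def by blast
  show "group_on F fadd fzero" using near_field unfolding left_near_field_def by blast
qed (auto simp: Psi_add bij_betw_apply[OF Psi_bij])

lemma scalar_map_bij: "bij_betw scalar_map K F"
  unfolding scalar_map_def using phi0_bij zero_in_K fzero_in_F by (rule bij_betw_fun_upd_Diff)

lemma scalar_map_in_F: "a \<in> K \<Longrightarrow> scalar_map a \<in> F"
  by (rule bij_betw_apply[OF scalar_map_bij])

lemma scalar_map_zero: "scalar_map zero = fzero"
  unfolding scalar_map_def by simp

lemma scalar_map_mult:
  assumes "a \<in> K" "b \<in> K"
  shows "scalar_map (mult a b) = fmult (scalar_map a) (scalar_map b)"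
proof (cases "a = zero \<or> b = zero")
  case True
  then show ?thesis
    using assms mult_zero scalar_map_in_F scalar_map_zero fmult_zero_left
      left_near_field_mult_zero_right[OF near_field] by auto
next
  case False
  then have "mult a b \<noteq> zero" using mult_group assms unfolding group_on_def by blast
  then show ?thesis using False assms phi0_mult unfolding scalar_map_def by simp
qed

lemma scalar_map_one: "scalar_map one = nf_one F fmult fzero"
proof -
  obtain e where e: "group_on (F - {fzero}) fmult e"
    using near_field unfolding left_near_field_def by blast
  have "scalar_map one \<in> F - {fzero}"
    using phi0_bij one_in_K zero_ne_one unfolding scalar_map_def by (auto dest: bij_betw_apply)
  moreover have "fmult (scalar_map one) (scalar_map one) = scalar_map one"
    using scalar_map_mult[OF one_in_K one_in_K] mult_group one_in_K zero_ne_one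
    unfolding group_on_def by auto
  ultimately show ?thesis using group_on_idempotent[OF e] nf_one_eq[OF e] by simp
qed

lemma Psi_smult:
  assumes "a \<in> K" "u \<in> K"
  shows "Psi (smult a u) = fmult (scalar_map a) (Psi u)"
proof (cases "a = zero")
  case True
  then show ?thesis
    using assms smult_zero Psi_zero fmult_zero_left bij_betw_apply[OF Psi_bij] scalar_map_zero
    by simp
next
  case False
  then show ?thesis using assms Psi_smult_nonzero unfolding scalar_map_def by simp
qed

lemma Psi_one: "Psi one \<in> F - {fzero}"
  using Psi_bij one_in_K zero_in_K zero_ne_one Psi_zero
  unfolding bij_betw_def inj_on_def by auto

lemma coord_eq: "a \<in> K \<Longrightarrow> coord a = fmult (scalar_map a) (Psi one)"
  unfolding coord_def using Psi_smult one_in_K by simp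

lemma coord_bij: "bij_betw coord K F"
proof -
  have "bij_betw ((\<lambda>x. fmult x (Psi one)) \<circ> scalar_map) K F"
    using scalar_map_bij left_near_field_bij_mult_right[OF near_field Psi_one]
    by (rule bij_betw_trans)
  then show ?thesis
    by (rule bij_betw_cong[THEN iffD1, rotated]) (simp add: coord_eq)
qed

lemma coord_zero: "coord zero = fzero"
  using coord_eq zero_in_K Psi_one fmult_zero_left scalar_map_zero by simp

lemma coord_in_F: "a \<in> K \<Longrightarrow> coord a \<in> F"
  by (rule bij_betw_apply[OF coord_bij])

lemma coord_right_qm_bij: "right_qm_bij K mult one F fmult (nf_one F fmult fzero) fzero coord"
  unfolding right_qm_bij_def
  by (intro conjI coord_bij exI[of _ scalar_map] exI[of _ "Psi one"])
    (use scalar_map_bij scalar_map_mult scalar_map_one Psi_one coord_eq in auto)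

lemma smult_one_add:
  assumes "a \<in> K" "b \<in> K"
  defines "c \<equiv> the_inv_into K coord (fadd (coord a) (coord b))"
  shows "c \<in> K \<and> vadd (smult a one) (smult b one) = smult c one"
proof -
  have "fadd (coord a) (coord b) \<in> F" using assms(1,2) coord_in_F fadd_in_F by blast
  then have "c \<in> K" and "coord c = fadd (coord a) (coord b)"
    unfolding c_def using bij_betw_apply[OF bij_betw_the_inv_into[OF coord_bij]]
      f_the_inv_into_f_bij_betw[OF coord_bij] by simp_all
  then have "Psi (smult c one) = Psi (vadd (smult a one) (smult b one))"
    using Psi_add smult_in_K assms(1,2) one_in_K unfolding coord_def by simp
  then show ?thesis
    using \<open>c \<in> K\<close> smult_in_K vadd_in_K assms(1,2) one_in_K
    by (auto dest: inj_onD[OF bij_betw_imp_inj_on[OF Psi_bij]])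
qed

lemma one_in_quasi_kernel: "one \<in> quasi_kernel K vadd K smult"
proof -
  have "\<exists>c\<in>K. vadd (smult a one) (smult b one) = smult c one" if "a \<in> K" "b \<in> K" for a b
    using smult_one_add[OF that] by blast
  then show ?thesis unfolding quasi_kernel_def using one_in_K by blast
qed

lemma add_at_one:
  assumes "a \<in> K" "b \<in> K"
  shows "add_at K vadd smult one a b = the_inv_into K coord (fadd (coord a) (coord b))"
  using smult_one_add[OF assms]
  by (intro near_vector_space_add_at_eqI[OF nvs one_in_K zero_ne_one[symmetric]]) simp_all

lemma add_at_one_in_K: "a \<in> K \<Longrightarrow> b \<in> K \<Longrightarrow> add_at K vadd smult one a b \<in> K"
  using add_at_one smult_one_add by simp

lemma coord_add_at_one:
  assumes "a \<in> K" "b \<in> K"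
  shows "coord (add_at K vadd smult one a b) = fadd (coord a) (coord b)"
proof -
  have "fadd (coord a) (coord b) \<in> F" using assms coord_in_F fadd_in_F by blast
  then show ?thesis using add_at_one[OF assms] f_the_inv_into_f_bij_betw[OF coord_bij] by simp
qed

lemma left_near_field_add_at_one: "left_near_field K (add_at K vadd smult one) mult zero"
proof (rule left_near_field_scalar_groupI[OF scalar_group])
  show "group_on K (add_at K vadd smult one) zero"
  proof (rule group_on_transfer[OF coord_bij])
    show "group_on F fadd (coord zero)"
      using near_field coord_zero unfolding left_near_field_def by simp
  qed (simp_all add: zero_in_K add_at_one_in_K coord_add_at_one)
  show "mult c (add_at K vadd smult one a b) = add_at K vadd smult one (mult c a) (mult c b)"
    if "a \<in> K" "b \<in> K" "c \<in> K" for a b c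
    by (rule near_vector_space_add_at_left_distrib[OF nvs one_in_quasi_kernel zero_ne_one[symmetric] that])
qed

end

theorem mainTheorem11:
  fixes F :: "'f set" and fadd fmult :: "'f \<Rightarrow> 'f \<Rightarrow> 'f" and fzero :: 'f
    and K :: "'k set" and vadd smult mult :: "'k \<Rightarrow> 'k \<Rightarrow> 'k" and one zero neg :: 'k
  assumes "left_near_field F fadd fmult fzero"
    and "elementary_nvs K vadd smult mult one zero neg F fadd fmult fzero"
  shows "one \<in> quasi_kernel K vadd K smult \<and>
         (\<exists>phi. right_qm_bij K mult one F fmult (nf_one F fmult fzero) fzero phi \<and>
            (\<forall>a\<in>K. \<forall>b\<in>K. add_at K vadd smult one a b =
                 the_inv_into K phi (fadd (phi a) (phi b)))) \<and>
         left_near_field K (add_at K vadd smult one) mult zero"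
proof -
  obtain Psi phi0 where "nvs_iso K vadd smult K mult zero F fadd fmult F fmult fzero Psi phi0"
    and "near_vector_space K vadd zero smult K mult one zero neg"
    using assms(2) unfolding elementary_nvs_def by blast
  then interpret elementary_nvs_coordinates F fadd fmult fzero K vadd smult mult one zero neg Psi phi0
    using assms(1) by unfold_locales
  show ?thesis
    using one_in_quasi_kernel coord_right_qm_bij add_at_one left_near_field_add_at_one by blast
qed

end
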